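(* Let $\Phi_1,\Phi_2$ be Young functions such that $\Phi_1\prec\Phi_2$, and let $u_1,u_2:\mathbb{R}^n\to(0,\infty)$ be measurable functions such that $u_i(x+y)\le u_i(x)\,u_i(y)$ for all $x,y\in\mathbb{R}^n$, $i=1,2$. Then the following statements are equivalent: (1) $u_1\preceq u_2$; (2) $L^{u_2}_{\Phi_2}(\mathbb{R}^n)\subseteq L^{u_1}_{\Phi_1}(\mathbb{R}^n)$; (3) there exists a constant $C>0$ such that $\|f\|_{L^{u_1}_{\Phi_1}(\mathbb{R}^n)}\le C\|f\|_{L^{u_2}_{\Phi_2}(\mathbb{R}^n)}$ for every $f\in L^{u_2}_{\Phi_2}(\mathbb{R}^n)$.
   Context: A Young function is a map $\Phi:[0,\infty)\to[0,\infty)$ that is convex, left-continuous, satisfies $\lim_{t\to0}\Phi(t)=0=\Phi(0)$ and $\lim_{t\to\infty}\Phi(t)=\infty$. For Young functions, $\Phi_1\prec\Phi_2$ means there is $C>0$ with $\Phi_1(t)\le\Phi_2(Ct)$ for all $t>0$. For $u_1,u_2:\mathbb{R}^n\to(0,\infty)$, $u_1\preceq u_2$ means there is $C>0$ with $u_1(x)\le Cu_2(x)$ for all $x\in\mathbb{R}^n$. For a Young function $\Phi$ and a measurable $u:\mathbb{R}^n\to(0,\infty)$, the weighted Orlicz space $L^u_\Phi(\mathbb{R}^n)$ is the set of measurable $f:\mathbb{R}^n\to\mathbb{R}$ such that $\int_{\mathbb{R}^n}\Phi(a|u(x)f(x)|)\,dx<\infty$ for some $a>0$, with norm $\|f\|_{L^u_\Phi(\mathbb{R}^n)}=\inf\{b>0:\int_{\mathbb{R}^n}\Phi(|u(x)f(x)|/b)\,dx\le1\}$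 (Lebesgue measure). *)

theory Defs
  imports "HOL-Analysis.Analysis"
begin

definition young_function :: "(real \<Rightarrow> real) \<Rightarrow> bool" where
  "young_function \<Phi> \<longleftrightarrow>
     (\<forall>t\<ge>0. \<Phi> t \<ge> 0) \<and>
     convex_on {0..} \<Phi> \<and>
     (\<forall>t>0. (\<Phi> \<longlongrightarrow> \<Phi> t) (at_left t)) \<and>
     \<Phi> 0 = 0 \<and> (\<Phi> \<longlongrightarrow> 0) (at_right 0) \<and>
     filterlim \<Phi> at_top at_top"

definition young_prec :: "(real \<Rightarrow> real) \<Rightarrow> (real \<Rightarrow> real) \<Rightarrow> bool" where
  "young_prec \<Phi>1 \<Phi>2 \<longleftrightarrow> (\<exists>C>0. \<forall>t>0. \<Phi>1 t \<le> \<Phi>2 (C * t))"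

definition weight_preceq :: "('a \<Rightarrow> real) \<Rightarrow> ('a \<Rightarrow> real) \<Rightarrow> bool" where
  "weight_preceq u1 u2 \<longleftrightarrow> (\<exists>C>0. \<forall>x. u1 x \<le> C * u2 x)"

definition weighted_orlicz :: "(real \<Rightarrow> real) \<Rightarrow> ('a::euclidean_space \<Rightarrow> real) \<Rightarrow> ('a \<Rightarrow> real) set" where
  "weighted_orlicz \<Phi> u = {f. f \<in> borel_measurable lebesgue \<and>
     (\<exists>a>0. (\<integral>\<^sup>+ x. ennreal (\<Phi> (a * \<bar>u x * f x\<bar>)) \<partial>lebesgue) < \<infinity>)}"

text \<open>Luxemburg norm, with value infinity when no admissible b exists.\<close>
definition weighted_orlicz_norm :: "(real \<Rightarrow> real) \<Rightarrow> ('a::euclidean_space \<Rightarrow> real) \<Rightarrow> ('a \<Rightarrow> real) \<Rightarrow> ereal" where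
  "weighted_orlicz_norm \<Phi> u f = Inf {ereal b | b. b > 0 \<and>
     (\<integral>\<^sup>+ x. ennreal (\<Phi> (\<bar>u x * f x\<bar> / b)) \<partial>lebesgue) \<le> 1}"

end

theory Submission
  imports Defs
begin

text \<open>
  If \<open>u\<^sub>1 \<le> C u\<^sub>2\<close> and \<open>\<Phi>\<^sub>1 t \<le> \<Phi>\<^sub>2 (C' t)\<close>, then
  \<open>\<Phi>\<^sub>1 (\<bar>u\<^sub>1 f\<bar> / (C C' b)) \<le> \<Phi>\<^sub>2 (\<bar>u\<^sub>2 f\<bar> / b)\<close> pointwise, so the Luxemburg norms
  compare with constant \<open>C C'\<close>; and a measurable function lies in a weighted Orlicz space
  exactly when its Luxemburg norm is finite, so the norm bound gives the inclusion.

  Conversely, fix a set \<open>E\<close> of positive finite measure on which \<open>u\<^sub>1 (- z)\<close> and \<open>u\<^sub>2 z\<close> are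
  at most \<open>M\<close>. By submultiplicativity, a point with \<open>u\<^sub>1 x > M\<^sup>2 N u\<^sub>2 x\<close> yields
  \<open>u\<^sub>1 \<ge> N u\<^sub>2\<close> on the whole translate \<open>x + E\<close>. If \<open>u\<^sub>1 \<preceq> u\<^sub>2\<close> fails, pick such
  translates \<open>D\<^sub>k\<close> with \<open>N\<^sub>k \<rightarrow> \<infinity>\<close>, and heights \<open>c\<^sub>k\<close> decreasing to 0 with
  \<open>\<Sum> \<Phi>\<^sub>2 (c\<^sub>k) \<bar>E\<bar> < \<infinity>\<close>. Then \<open>f = sup\<^sub>k c\<^sub>k 1\<^bsub>D\<^sub>k\<^esub> / u\<^sub>2\<close> belongs to
  \<open>L\<^bsup>u\<^sub>2\<^esup>\<^sub>\<Phi>\<^sub>2\<close>, whereas \<open>\<integral> \<Phi>\<^sub>1 (a \<bar>u\<^sub>1 f\<bar>) \<ge> \<Phi>\<^sub>1 (a N\<^sub>k c\<^sub>k) \<bar>E\<bar>\<close>, which is unbounded in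
  \<open>k\<close> for every \<open>a > 0\<close> once \<open>N\<^sub>k\<close> is chosen large enough.
\<close>

section \<open>Young functions\<close>

lemma young_function_nonneg: "young_function \<Phi> \<Longrightarrow> 0 \<le> t \<Longrightarrow> 0 \<le> \<Phi> t"
  unfolding young_function_def by auto

lemma young_function_scale_le:
  assumes "young_function \<Phi>" "0 \<le> l" "l \<le> 1" "0 \<le> t"
  shows "\<Phi> (l * t) \<le> l * \<Phi> t"
proof -
  have "convex_on {0..} \<Phi>" and "\<Phi> 0 = 0"
    using assms(1) unfolding young_function_def by auto
  then show ?thesis
    using convex_onD[of "{0..}" \<Phi> l 0 t] assms(2-4) by simp
qed

lemma young_function_mono:
  assumes "young_function \<Phi>" "0 \<le> s" "s \<le> t"
  shows "\<Phi> s \<le> \<Phi> t"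
proof (cases "t = 0")
  case True
  then show ?thesis using assms by auto
next
  case False
  then have t: "t > 0" using assms by auto
  have "\<Phi> s = \<Phi> ((s / t) * t)" using t by simp
  also have "\<dots> \<le> (s / t) * \<Phi> t"
    by (rule young_function_scale_le) (use assms t in auto)
  also have "\<dots> \<le> 1 * \<Phi> t"
    using young_function_nonneg[OF assms(1), of t] assms t
    by (intro mult_right_mono) auto
  finally show ?thesis by simp
qed

lemma borel_measurable_young_function_comp:
  assumes "young_function \<Phi>" "g \<in> borel_measurable M" "\<And>x. 0 \<le> g x"
  shows "(\<lambda>x. \<Phi> (g x)) \<in> borel_measurable M"
proof -
  have "mono (\<lambda>t. \<Phi> (max 0 t))"
    by (rule monoI) (auto intro!: young_function_mono[OF assms(1)])
  then have "(\<lambda>t. \<Phi> (max 0 t)) \<in> borel_measurable borel"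
    by (rule borel_measurable_mono)
  from measurable_comp[OF assms(2) this] show ?thesis
    using assms(3) by (simp add: o_def max_absorb2)
qed

lemma young_precD:
  assumes "young_function \<Phi>1" "young_function \<Phi>2" "young_prec \<Phi>1 \<Phi>2"
  obtains C where "C > 0" "\<And>t. 0 \<le> t \<Longrightarrow> \<Phi>1 t \<le> \<Phi>2 (C * t)"
proof -
  obtain C where C: "C > 0" "\<And>t. t > 0 \<Longrightarrow> \<Phi>1 t \<le> \<Phi>2 (C * t)"
    using assms(3) unfolding young_prec_def by auto
  moreover have "\<Phi>1 0 \<le> \<Phi>2 (C * 0)"
    using assms(1,2) by (simp add: young_function_def)
  ultimately show ?thesis
    using that by (metis order.order_iff_strict)
qed

lemma young_function_exceeds:
  assumes "young_function \<Phi>" "c > 0"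
  obtains N where "N > 0" "B \<le> \<Phi> (N * c)"
proof -
  have "filterlim \<Phi> at_top at_top"
    using assms(1) unfolding young_function_def by auto
  then obtain T where T: "\<And>t. T \<le> t \<Longrightarrow> B \<le> \<Phi> t"
    by (auto simp: filterlim_at_top eventually_at_top_linorder)
  define N where "N = max 1 (T / c)"
  have "T \<le> N * c"
    using assms(2) by (simp add: N_def pos_divide_le_eq max_mult_distrib_right)
  then show ?thesis
    by (intro that[of N] T) (simp add: N_def)
qed

lemma young_function_decseq_below:
  assumes "young_function \<Phi>" "\<And>k. 0 < \<epsilon> k"
  obtains c :: "nat \<Rightarrow> real" where "\<And>k. 0 < c k" "decseq c" "\<And>k. \<Phi> (c k) \<le> \<epsilon> k"
proof -
  have "\<exists>d>0. \<forall>t. 0 < t \<and> t \<le> d \<longrightarrow> \<Phi> t \<le> \<epsilon> k" for k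
  proof -
    have "(\<Phi> \<longlongrightarrow> 0) (at_right 0)"
      using assms(1) unfolding young_function_def by auto
    then have "eventually (\<lambda>t. dist (\<Phi> t) 0 < \<epsilon> k) (at_right 0)"
      using assms(2) by (rule tendstoD)
    then obtain b where b: "b > (0::real)" "\<And>t. 0 < t \<Longrightarrow> t < b \<Longrightarrow> \<bar>\<Phi> t\<bar> < \<epsilon> k"
      unfolding eventually_at_right_field by auto
    have "\<Phi> t \<le> \<epsilon> k" if "0 < t" "t \<le> b / 2" for t
      using b(2)[of t] b(1) that by auto
    then show ?thesis
      using b(1) by (intro exI[of _ "b / 2"]) auto
  qed
  then obtain d where d: "\<And>k. d k > 0" "\<And>k t. 0 < t \<Longrightarrow> t \<le> d k \<Longrightarrow> \<Phi> t \<le> \<epsilon> k"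
    by metis
  define c where "c k = Min (d ` {..k})" for k
  have c_pos: "0 < c k" for k
    using d(1) by (simp add: c_def)
  have "c k \<le> d k" for k
    unfolding c_def by (rule Min_le) auto
  then have "\<Phi> (c k) \<le> \<epsilon> k" for k
    using d(2) c_pos by blast
  moreover have "decseq c"
    unfolding c_def by (rule decseq_SucI, rule Min_antimono) auto
  ultimately show ?thesis
    using that c_pos by blast
qed

lemma young_function_nn_integral_lower_bound:
  assumes "young_function \<Phi>" "D \<in> sets M" "0 \<le> t" "\<And>y. y \<in> D \<Longrightarrow> t \<le> g y"
  shows "ennreal (\<Phi> t) * emeasure M D \<le> (\<integral>\<^sup>+ y. ennreal (\<Phi> (g y)) \<partial>M)"
proof -
  have "ennreal (\<Phi> t) * emeasure M D = (\<integral>\<^sup>+ y. ennreal (\<Phi> t) * indicator D y \<partial>M)"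
    using assms(2) by (rule nn_integral_cmult_indicator[symmetric])
  also have "\<dots> \<le> (\<integral>\<^sup>+ y. ennreal (\<Phi> (g y)) \<partial>M)"
  proof (rule nn_integral_mono)
    fix y
    show "ennreal (\<Phi> t) * indicator D y \<le> ennreal (\<Phi> (g y))"
      using young_function_mono[OF assms(1,3,4)] by (cases "y \<in> D") (auto intro: ennreal_leI)
  qed
  finally show ?thesis .
qed

lemma young_functions_separating_sequences:
  assumes "young_function \<Phi>1" "young_function \<Phi>2" "e > 0"
  obtains c N :: "nat \<Rightarrow> real" where "\<And>k. 0 < c k" "decseq c" "\<And>k. 0 < N k"
    "(\<Sum>k. ennreal (\<Phi>2 (c k)) * ennreal e) < \<infinity>"
    "\<And>k. ennreal (real (Suc k)) \<le> ennreal (\<Phi>1 (N k * c k / real (Suc k))) * ennreal e"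
proof -
  obtain c where c: "\<And>k. 0 < c k" "decseq c" "\<And>k. \<Phi>2 (c k) \<le> (1 / 2) ^ k / e"
    using young_function_decseq_below[OF assms(2), of "\<lambda>k. (1 / 2) ^ k / e"] assms(3) by auto
  have "ennreal (\<Phi>2 (c k)) * ennreal e \<le> ennreal ((1 / 2) ^ k)" for k
  proof -
    have "\<Phi>2 (c k) * e \<le> (1 / 2) ^ k"
      using c(3)[of k] assms(3) by (simp add: pos_le_divide_eq)
    then show ?thesis
      using young_function_nonneg[OF assms(2), of "c k"] c(1)[of k]
      by (simp add: ennreal_mult'[symmetric] ennreal_leI)
  qed
  then have "(\<Sum>k. ennreal (\<Phi>2 (c k)) * ennreal e) \<le> (\<Sum>k. ennreal ((1 / 2) ^ k))"
    by (intro suminf_le) auto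
  also have "\<dots> < \<infinity>"
    by (simp add: suminf_ennreal2 summable_geometric)
  finally have summable: "(\<Sum>k. ennreal (\<Phi>2 (c k)) * ennreal e) < \<infinity>" .
  have "\<exists>N>0. ennreal (real (Suc k)) \<le> ennreal (\<Phi>1 (N * c k / real (Suc k))) * ennreal e" for k
  proof -
    have "0 < c k / real (Suc k)"
      using c(1)[of k] by simp
    then obtain N where N: "N > 0" "real (Suc k) / e \<le> \<Phi>1 (N * (c k / real (Suc k)))"
      by (rule young_function_exceeds[OF assms(1)])
    have "0 \<le> \<Phi>1 (N * c k / real (Suc k))"
      using N(1) c(1)[of k] by (intro young_function_nonneg[OF assms(1)]) simp
    moreover have "real (Suc k) \<le> \<Phi>1 (N * c k / real (Suc k)) * e"
      using N(2) assms(3) by (simp add: pos_divide_le_eq)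
    ultimately have "ennreal (real (Suc k)) \<le> ennreal (\<Phi>1 (N * c k / real (Suc k))) * ennreal e"
      by (simp only: ennreal_mult'[symmetric] ennreal_leI)
    with N(1) show ?thesis
      by blast
  qed
  then obtain N where "\<And>k. 0 < N k"
    "\<And>k. ennreal (real (Suc k)) \<le> ennreal (\<Phi>1 (N k * c k / real (Suc k))) * ennreal e"
    by metis
  with c(1,2) summable show ?thesis
    using that by blast
qed

section \<open>The Luxemburg norm\<close>

lemma weighted_orlicz_norm_le:
  assumes "b > 0" "(\<integral>\<^sup>+ x. ennreal (\<Phi> (\<bar>u x * f x\<bar> / b)) \<partial>lebesgue) \<le> 1"
  shows "weighted_orlicz_norm \<Phi> u f \<le> ereal b"
  unfolding weighted_orlicz_norm_def by (rule Inf_lower) (use assms in auto)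

lemma weighted_orlicz_norm_finite:
  assumes "young_function \<Phi>" "u \<in> borel_measurable lebesgue" "f \<in> weighted_orlicz \<Phi> u"
  shows "weighted_orlicz_norm \<Phi> u f < \<infinity>"
proof -
  obtain a where a: "a > 0" and f: "f \<in> borel_measurable lebesgue"
    and fin: "(\<integral>\<^sup>+ x. ennreal (\<Phi> (a * \<bar>u x * f x\<bar>)) \<partial>lebesgue) < \<infinity>"
    using assms(3) unfolding weighted_orlicz_def by auto
  define I where "I = enn2real (\<integral>\<^sup>+ x. ennreal (\<Phi> (a * \<bar>u x * f x\<bar>)) \<partial>lebesgue)"
  have I: "(\<integral>\<^sup>+ x. ennreal (\<Phi> (a * \<bar>u x * f x\<bar>)) \<partial>lebesgue) = ennreal I" "0 \<le> I"
    using fin by (simp_all add: I_def less_top[symmetric])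
  define r where "r = max 1 I"
  have r: "r \<ge> 1"
    by (simp add: r_def)
  have "(\<integral>\<^sup>+ x. ennreal (\<Phi> (\<bar>u x * f x\<bar> / (r / a))) \<partial>lebesgue)
      \<le> (\<integral>\<^sup>+ x. ennreal (1 / r) * ennreal (\<Phi> (a * \<bar>u x * f x\<bar>)) \<partial>lebesgue)"
  proof (rule nn_integral_mono)
    fix x
    have "\<Phi> (\<bar>u x * f x\<bar> / (r / a)) = \<Phi> ((1 / r) * (a * \<bar>u x * f x\<bar>))"
      by (simp add: field_simps)
    also have "\<dots> \<le> (1 / r) * \<Phi> (a * \<bar>u x * f x\<bar>)"
      by (rule young_function_scale_le[OF assms(1)]) (use r a in auto)
    finally show "ennreal (\<Phi> (\<bar>u x * f x\<bar> / (r / a))) \<le> ennreal (1 / r) * ennreal (\<Phi> (a * \<bar>u x * f x\<bar>))"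
      using r by (simp add: ennreal_mult'[symmetric] ennreal_leI)
  qed
  also have "\<dots> = ennreal (1 / r) * ennreal I"
  proof -
    have "(\<lambda>x. \<Phi> (a * \<bar>u x * f x\<bar>)) \<in> borel_measurable lebesgue"
      using assms(2) f a by (intro borel_measurable_young_function_comp[OF assms(1)]) auto
    then show ?thesis
      by (simp add: nn_integral_cmult I)
  qed
  also have "\<dots> \<le> 1"
    using r I(2) by (simp add: ennreal_mult'[symmetric] r_def)
  finally have "weighted_orlicz_norm \<Phi> u f \<le> ereal (r / a)"
    using r a by (intro weighted_orlicz_norm_le) auto
  then show ?thesis
    by (rule le_less_trans) simp
qed

lemma weighted_orlicz_if_norm_finite:
  assumes "f \<in> borel_measurable lebesgue" "weighted_orlicz_norm \<Phi> u f < \<infinity>"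
  shows "f \<in> weighted_orlicz \<Phi> u"
proof -
  have "\<exists>b>0. (\<integral>\<^sup>+ x. ennreal (\<Phi> (\<bar>u x * f x\<bar> / b)) \<partial>lebesgue) \<le> 1"
  proof (rule ccontr)
    assume "\<not> ?thesis"
    then have "weighted_orlicz_norm \<Phi> u f = Inf {}"
      unfolding weighted_orlicz_norm_def by (intro arg_cong[where f = Inf]) auto
    with assms(2) show False
      by (simp add: top_ereal_def)
  qed
  then obtain b where "b > 0" "(\<integral>\<^sup>+ x. ennreal (\<Phi> ((1 / b) * \<bar>u x * f x\<bar>)) \<partial>lebesgue) \<le> 1"
    by auto
  then show ?thesis
    using assms(1) unfolding weighted_orlicz_def
    by (intro CollectI conjI exI[of _ "1 / b"]) (auto simp: le_less_trans)
qed

lemma weighted_orlicz_subset_if_norm_le: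
  assumes "young_function \<Phi>2" "u2 \<in> borel_measurable lebesgue" "C > 0"
    and "\<And>f. f \<in> weighted_orlicz \<Phi>2 u2 \<Longrightarrow>
      weighted_orlicz_norm \<Phi>1 u1 f \<le> ereal C * weighted_orlicz_norm \<Phi>2 u2 f"
  shows "weighted_orlicz \<Phi>2 u2 \<subseteq> weighted_orlicz \<Phi>1 u1"
proof
  fix f assume f: "f \<in> weighted_orlicz \<Phi>2 u2"
  have "weighted_orlicz_norm \<Phi>2 u2 f < \<infinity>"
    using weighted_orlicz_norm_finite[OF assms(1,2) f] .
  then have "weighted_orlicz_norm \<Phi>1 u1 f < \<infinity>"
    using assms(3) assms(4)[OF f] by (cases "weighted_orlicz_norm \<Phi>2 u2 f") auto
  moreover have "f \<in> borel_measurable lebesgue"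
    using f unfolding weighted_orlicz_def by auto
  ultimately show "f \<in> weighted_orlicz \<Phi>1 u1"
    by (rule weighted_orlicz_if_norm_finite[rotated])
qed

lemma weighted_orlicz_norm_le_cmult:
  assumes "K > 0"
    and "\<And>b x. b > 0 \<Longrightarrow> \<Phi>1 (\<bar>u1 x * f x\<bar> / (K * b)) \<le> \<Phi>2 (\<bar>u2 x * f x\<bar> / b)"
  shows "weighted_orlicz_norm \<Phi>1 u1 f \<le> ereal K * weighted_orlicz_norm \<Phi>2 u2 f"
proof -
  let ?P = "\<lambda>x. \<exists>b. x = ereal b \<and> b > 0 \<and> (\<integral>\<^sup>+ x. ennreal (\<Phi>2 (\<bar>u2 x * f x\<bar> / b)) \<partial>lebesgue) \<le> 1"
  have "ereal K * weighted_orlicz_norm \<Phi>2 u2 f = Inf {ereal K * x |x. ?P x}"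
    unfolding weighted_orlicz_norm_def ereal_Inf_cmult[OF assms(1), symmetric]
    by (rule arg_cong[where f = Inf]) auto
  moreover have "weighted_orlicz_norm \<Phi>1 u1 f \<le> Inf {ereal K * x |x. ?P x}"
    unfolding weighted_orlicz_norm_def
  proof (rule Inf_superset_mono, safe)
    fix b assume b: "b > 0" and "(\<integral>\<^sup>+ x. ennreal (\<Phi>2 (\<bar>u2 x * f x\<bar> / b)) \<partial>lebesgue) \<le> 1"
    moreover have "(\<integral>\<^sup>+ x. ennreal (\<Phi>1 (\<bar>u1 x * f x\<bar> / (K * b))) \<partial>lebesgue)
        \<le> (\<integral>\<^sup>+ x. ennreal (\<Phi>2 (\<bar>u2 x * f x\<bar> / b)) \<partial>lebesgue)"
      using assms(2)[OF b] by (intro nn_integral_mono ennreal_leI)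
    ultimately show "\<exists>b'. ereal K * ereal b = ereal b' \<and> b' > 0 \<and>
        (\<integral>\<^sup>+ x. ennreal (\<Phi>1 (\<bar>u1 x * f x\<bar> / b')) \<partial>lebesgue) \<le> 1"
      using assms(1) by (intro exI[of _ "K * b"]) auto
  qed
  ultimately show ?thesis
    by simp
qed

lemma weighted_orlicz_norm_le_if_weight_preceq:
  assumes "young_function \<Phi>1" "young_function \<Phi>2" "young_prec \<Phi>1 \<Phi>2"
    and "weight_preceq u1 u2" "\<And>x. 0 \<le> u1 x"
  obtains K where "K > 0"
    "\<And>f. weighted_orlicz_norm \<Phi>1 u1 f \<le> ereal K * weighted_orlicz_norm \<Phi>2 u2 f"
proof -
  obtain C' where C': "C' > 0" "\<And>t. 0 \<le> t \<Longrightarrow> \<Phi>1 t \<le> \<Phi>2 (C' * t)"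
    using young_precD[OF assms(1-3)] by blast
  obtain C where C: "C > 0" "\<And>x. u1 x \<le> C * u2 x"
    using assms(4) unfolding weight_preceq_def by blast
  have "\<Phi>1 (\<bar>u1 x * f x\<bar> / (C * C' * b)) \<le> \<Phi>2 (\<bar>u2 x * f x\<bar> / b)" if b: "b > 0" for f b x
  proof -
    have "0 \<le> u2 x"
      using C(1) C(2)[of x] assms(5)[of x] by (meson order.trans zero_le_mult_iff not_less)
    then have "\<bar>u1 x\<bar> \<le> C * \<bar>u2 x\<bar>"
      using C(2)[of x] assms(5)[of x] by simp
    then have "\<bar>u1 x * f x\<bar> \<le> C * \<bar>u2 x * f x\<bar>"
      using mult_right_mono[of "\<bar>u1 x\<bar>" "C * \<bar>u2 x\<bar>" "\<bar>f x\<bar>"] by (simp add: abs_mult mult.assoc)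
    then have "\<bar>u1 x * f x\<bar> / (C * C' * b) \<le> C * \<bar>u2 x * f x\<bar> / (C * C' * b)"
      using b C(1) C'(1) by (intro divide_right_mono) auto
    also have "\<dots> = (\<bar>u2 x * f x\<bar> / b) / C'"
      using C(1) by simp
    finally have "\<Phi>1 (\<bar>u1 x * f x\<bar> / (C * C' * b)) \<le> \<Phi>1 ((\<bar>u2 x * f x\<bar> / b) / C')"
      using b C(1) C'(1) by (intro young_function_mono[OF assms(1)]) auto
    also have "\<dots> \<le> \<Phi>2 (\<bar>u2 x * f x\<bar> / b)"
      using C'(2)[of "(\<bar>u2 x * f x\<bar> / b) / C'"] b C'(1) by simp
    finally show ?thesis .
  qed
  then show ?thesis
    using C(1) C'(1) by (intro that[of "C * C'"] weighted_orlicz_norm_le_cmult) auto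
qed

section \<open>Suprema of decreasing steps\<close>

definition step_sup :: "(nat \<Rightarrow> real) \<Rightarrow> (nat \<Rightarrow> 'a set) \<Rightarrow> 'a \<Rightarrow> real" where
  "step_sup c D y = (SUP k. c k * indicator (D k) y)"

lemma bdd_above_step_sup:
  fixes c :: "nat \<Rightarrow> real"
  assumes "decseq c" "\<And>k. 0 \<le> c k"
  shows "bdd_above (range (\<lambda>k. c k * indicator (D k) y))"
proof (rule bdd_aboveI2)
  fix k
  show "c k * indicator (D k) y \<le> c 0"
    using assms(2)[of 0] decseqD[OF assms(1), of 0 k] by (cases "y \<in> D k") simp_all
qed

lemma step_sup_ge:
  assumes "decseq c" "\<And>k. 0 \<le> c k" "y \<in> D k"
  shows "c k \<le> step_sup c D y"
proof -
  have "c k * indicator (D k) y \<le> step_sup c D y"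
    unfolding step_sup_def by (rule cSUP_upper[OF UNIV_I bdd_above_step_sup[OF assms(1,2)]])
  then show ?thesis
    using assms(3) by simp
qed

lemma step_sup_nonneg:
  assumes "decseq c" "\<And>k. 0 \<le> c k"
  shows "0 \<le> step_sup c D y"
proof -
  have "c 0 * indicator (D 0) y \<le> step_sup c D y"
    unfolding step_sup_def by (rule cSUP_upper[OF UNIV_I bdd_above_step_sup[OF assms]])
  moreover have "0 \<le> c 0 * indicator (D 0) y"
    using assms(2)[of 0] by simp
  ultimately show ?thesis
    by linarith
qed

lemma borel_measurable_step_sup:
  assumes "decseq c" "\<And>k. 0 \<le> c k" "\<And>k. D k \<in> sets M"
  shows "step_sup c D \<in> borel_measurable M"
  unfolding step_sup_def[abs_def]
  using assms(3) by (intro borel_measurable_cSUP) (auto intro!: bdd_above_step_sup[OF assms(1,2)])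

lemma young_function_step_sup_le:
  assumes "young_function \<Phi>" "decseq c" "\<And>k. 0 \<le> c k"
  shows "ennreal (\<Phi> (step_sup c D y)) \<le> (\<Sum>k. ennreal (\<Phi> (c k)) * indicator (D k) y)"
proof (cases "\<exists>k. y \<in> D k")
  case False
  then show ?thesis
    using assms(1) by (simp add: step_sup_def young_function_def)
next
  case True
  define j where "j = (LEAST k. y \<in> D k)"
  have j: "y \<in> D j"
    unfolding j_def using True by (metis LeastI)
  \<comment> \<open>Since c decreases, the supremum is attained at the first step containing y.\<close>
  have "step_sup c D y \<le> c j"
    unfolding step_sup_def
  proof (rule cSUP_least)
    fix k
    show "c k * indicator (D k) y \<le> c j"
    proof (cases "y \<in> D k")
      case True
      then have "j \<le> k"
        unfolding j_def by (rule Least_le)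
      then show ?thesis
        using True decseqD[OF assms(2)] by simp
    qed (use assms(3) in simp)
  qed simp
  then have "\<Phi> (step_sup c D y) \<le> \<Phi> (c j)"
    by (rule young_function_mono[OF assms(1) step_sup_nonneg[OF assms(2,3)]])
  then have "ennreal (\<Phi> (step_sup c D y)) \<le> ennreal (\<Phi> (c j)) * indicator (D j) y"
    using j by (simp add: ennreal_leI)
  also have "\<dots> \<le> (\<Sum>k. ennreal (\<Phi> (c k)) * indicator (D k) y)"
  proof -
    have "F j \<le> suminf F" for F :: "nat \<Rightarrow> ennreal"
      using sum_le_suminf[OF summableI, of "{j}" F] by simp
    then show ?thesis .
  qed
  finally show ?thesis .
qed

lemma step_sup_div_in_weighted_orlicz:
  assumes "young_function \<Phi>" "u \<in> borel_measurable lebesgue" "\<And>y. 0 < u y"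
    and "decseq c" "\<And>k. 0 \<le> c k" "\<And>k. D k \<in> sets lebesgue"
    and "(\<Sum>k. ennreal (\<Phi> (c k)) * emeasure lebesgue (D k)) < \<infinity>"
  shows "(\<lambda>y. step_sup c D y / u y) \<in> weighted_orlicz \<Phi> u"
proof -
  have "(\<integral>\<^sup>+ y. ennreal (\<Phi> (1 * \<bar>u y * (step_sup c D y / u y)\<bar>)) \<partial>lebesgue)
      = (\<integral>\<^sup>+ y. ennreal (\<Phi> (step_sup c D y)) \<partial>lebesgue)"
    using assms(3) by (simp add: less_imp_neq[symmetric] abs_of_nonneg[OF step_sup_nonneg[OF assms(4,5)]])
  also have "\<dots> \<le> (\<integral>\<^sup>+ y. (\<Sum>k. ennreal (\<Phi> (c k)) * indicator (D k) y) \<partial>lebesgue)"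
    by (intro nn_integral_mono young_function_step_sup_le[OF assms(1,4,5)])
  also have "\<dots> = (\<Sum>k. ennreal (\<Phi> (c k)) * emeasure lebesgue (D k))"
    using assms(6) by (simp add: nn_integral_suminf nn_integral_cmult_indicator)
  finally have "(\<integral>\<^sup>+ y. ennreal (\<Phi> (1 * \<bar>u y * (step_sup c D y / u y)\<bar>)) \<partial>lebesgue) < \<infinity>"
    using assms(7) by (rule le_less_trans)
  moreover have "(\<lambda>y. step_sup c D y / u y) \<in> borel_measurable lebesgue"
    using borel_measurable_step_sup[OF assms(4-6)] assms(2) by measurable
  ultimately show ?thesis
    unfolding weighted_orlicz_def by (intro CollectI conjI exI[of _ 1]) auto
qed

lemma not_in_weighted_orlicz_if_unbounded:
  assumes "young_function \<Phi>" "\<And>k. D k \<in> sets lebesgue" "\<And>k. 0 \<le> t k"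
    and "\<And>k y. y \<in> D k \<Longrightarrow> t k \<le> \<bar>u y * f y\<bar>"
    and "\<And>k. ennreal (real (Suc k)) \<le> ennreal (\<Phi> (t k / real (Suc k))) * emeasure lebesgue (D k)"
  shows "f \<notin> weighted_orlicz \<Phi> u"
proof
  assume "f \<in> weighted_orlicz \<Phi> u"
  then obtain a where a: "a > 0"
    and fin: "(\<integral>\<^sup>+ y. ennreal (\<Phi> (a * \<bar>u y * f y\<bar>)) \<partial>lebesgue) < \<infinity>"
    unfolding weighted_orlicz_def by auto
  define r where "r = enn2real (\<integral>\<^sup>+ y. ennreal (\<Phi> (a * \<bar>u y * f y\<bar>)) \<partial>lebesgue)"
  have r: "(\<integral>\<^sup>+ y. ennreal (\<Phi> (a * \<bar>u y * f y\<bar>)) \<partial>lebesgue) = ennreal r"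
    using fin by (simp add: r_def less_top[symmetric])
  obtain k :: nat where k: "max r (1 / a) \<le> real k"
    using real_arch_simple by blast
  have "1 / real (Suc k) \<le> a"
    using k a by (simp add: field_simps)
  then have "(1 / real (Suc k)) * t k \<le> a * t k"
    using assms(3)[of k] by (rule mult_right_mono)
  then have "t k / real (Suc k) \<le> a * \<bar>u y * f y\<bar>" if "y \<in> D k" for y
    using assms(4)[OF that] a by (simp add: order.trans[OF _ mult_left_mono])
  then have "ennreal (\<Phi> (t k / real (Suc k))) * emeasure lebesgue (D k) \<le> ennreal r"
    unfolding r[symmetric] using assms(3)[of k]
    by (intro young_function_nn_integral_lower_bound[OF assms(1,2)]) auto
  then have "ennreal (real (Suc k)) \<le> ennreal r"
    using assms(5)[of k] by (rule order.trans[rotated])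
  then have "real (Suc k) \<le> r"
    by (rule ennreal_le_iff[THEN iffD1, rotated]) (simp add: r_def)
  then show False
    using k by simp
qed

section \<open>Submultiplicative weights\<close>

lemma lmeasurable_positive_measure_bounded:
  fixes g :: "'a::euclidean_space \<Rightarrow> real"
  assumes "g \<in> borel_measurable lebesgue"
  obtains E M where "E \<in> lmeasurable" "0 < measure lebesgue E" "\<And>z. z \<in> E \<Longrightarrow> g z \<le> M"
proof -
  define F where "F n = ball (0::'a) 1 \<inter> {z. g z \<le> real n}" for n :: nat
  have F: "F n \<in> lmeasurable" for n
  proof -
    have "{z \<in> space lebesgue. g z \<le> real n} \<in> sets lebesgue"
      using assms by measurable
    then have "F n \<in> sets lebesgue"
      unfolding F_def by (intro sets.Int) auto
    moreover have "F n \<subseteq> ball 0 1"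
      by (auto simp: F_def)
    ultimately show ?thesis
      using fmeasurableI2[OF lmeasurable_ball] by blast
  qed
  have "(\<Union>n. F n) = ball 0 1"
    using real_arch_simple by (auto simp: F_def)
  moreover have "ball (0::'a) 1 \<notin> null_sets lebesgue"
    using content_ball_pos[of 1 "0::'a"] by (auto simp: null_sets_def measure_def)
  ultimately obtain n where "F n \<notin> null_sets lebesgue"
    using null_sets_UN[of F lebesgue] by metis
  then have "0 < measure lebesgue (F n)"
    using F[of n] by (simp add: null_sets_def emeasure_eq_measure2 zero_less_measure_iff fmeasurableD)
  then show ?thesis
    using F by (intro that[of "F n" "real n"]) (auto simp: F_def)
qed

lemma submultiplicative_translate_ratio:
  fixes u1 u2 :: "'a::group_add \<Rightarrow> real"
  assumes "\<And>x y. u1 (x + y) \<le> u1 x * u1 y" "\<And>x y. u2 (x + y) \<le> u2 x * u2 y"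
    and "\<And>x. 0 < u1 x" "\<And>x. 0 < u2 x"
    and "u1 (- z) \<le> M" "u2 z \<le> M" "0 \<le> N" "M * M * N * u2 x < u1 x"
  shows "N * u2 (x + z) \<le> u1 (x + z)"
proof -
  have M: "0 < M"
    using assms(4)[of z] assms(6) by linarith
  have "u1 x \<le> u1 (x + z) * u1 (- z)"
    using assms(1)[of "x + z" "- z"] by simp
  also have "\<dots> \<le> u1 (x + z) * M"
    using assms(3,5) by (simp add: less_imp_le)
  finally have u1: "u1 x \<le> M * u1 (x + z)"
    by (simp add: mult.commute)
  have "u2 (x + z) \<le> u2 x * u2 z"
    by (rule assms(2))
  also have "\<dots> \<le> u2 x * M"
    using assms(4)[of x] assms(6) by simp
  finally have "u2 (x + z) \<le> u2 x * M" .
  then have "M * (N * u2 (x + z)) \<le> M * M * N * u2 x"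
    using M assms(7) mult_left_mono[of "u2 (x + z)" "u2 x * M" "M * N"] by (simp add: ac_simps)
  with assms(8) u1 have "M * (N * u2 (x + z)) \<le> M * u1 (x + z)"
    by linarith
  then show ?thesis
    using M by simp
qed

lemma translates_with_large_weight_ratio:
  fixes u1 u2 :: "'a::euclidean_space \<Rightarrow> real"
  assumes "\<And>x. 0 < u1 x" "\<And>x. 0 < u2 x"
    and "u1 \<in> borel_measurable lebesgue" "u2 \<in> borel_measurable lebesgue"
    and "\<And>x y. u1 (x + y) \<le> u1 x * u1 y" "\<And>x y. u2 (x + y) \<le> u2 x * u2 y"
    and "\<not> weight_preceq u1 u2"
  obtains e where "e > 0"
    "\<And>N. 0 \<le> N \<Longrightarrow> \<exists>D\<in>lmeasurable. measure lebesgue D = e \<and> (\<forall>y\<in>D. N * u2 y \<le> u1 y)"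
proof -
  have "(\<lambda>z. u1 (- z)) \<in> borel_measurable lebesgue"
    using measurable_comp[OF lebesgue_measurable_scaling[of "-1"] assms(3)] by (simp add: o_def)
  then have "(\<lambda>z. max (u1 (- z)) (u2 z)) \<in> borel_measurable lebesgue"
    using assms(4) by measurable
  then obtain E M where E: "E \<in> lmeasurable" "0 < measure lebesgue E"
    and M: "\<And>z. z \<in> E \<Longrightarrow> max (u1 (- z)) (u2 z) \<le> M"
    by (rule lmeasurable_positive_measure_bounded) blast
  show ?thesis
  proof (rule that[OF E(2)])
    fix N :: real
    assume N: "0 \<le> N"
    obtain x where x: "max 1 (M * M * N) * u2 x < u1 x"
      using assms(7) unfolding weight_preceq_def by (metis not_le less_max_iff_disj zero_less_one)
    then have "M * M * N * u2 x < u1 x"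
      using assms(2)[of x] by (meson le_less_trans less_imp_le max.cobounded2 mult_right_mono)
    then have "\<forall>y\<in>(+) x ` E. N * u2 y \<le> u1 y"
      using M N by (auto intro!: submultiplicative_translate_ratio[OF assms(5,6,1,2), where M = M])
    moreover have "(+) x ` E \<in> lmeasurable" "measure lebesgue ((+) x ` E) = measure lebesgue E"
      using E(1) by (simp_all add: measurable_translation measure_translation)
    ultimately show "\<exists>D\<in>lmeasurable. measure lebesgue D = measure lebesgue E \<and> (\<forall>y\<in>D. N * u2 y \<le> u1 y)"
      by blast
  qed
qed

lemma weighted_orlicz_not_subset:
  fixes u1 u2 :: "'a::euclidean_space \<Rightarrow> real"
  assumes "young_function \<Phi>1" "young_function \<Phi>2"
    and "\<And>x. 0 < u1 x" "\<And>x. 0 < u2 x"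
    and "u1 \<in> borel_measurable lebesgue" "u2 \<in> borel_measurable lebesgue"
    and "\<And>x y. u1 (x + y) \<le> u1 x * u1 y" "\<And>x y. u2 (x + y) \<le> u2 x * u2 y"
    and "\<not> weight_preceq u1 u2"
  shows "\<not> weighted_orlicz \<Phi>2 u2 \<subseteq> weighted_orlicz \<Phi>1 u1"
proof -
  obtain e where e: "e > 0"
    and translate: "\<And>N. 0 \<le> N \<Longrightarrow> \<exists>D\<in>lmeasurable. measure lebesgue D = e \<and> (\<forall>y\<in>D. N * u2 y \<le> u1 y)"
    using translates_with_large_weight_ratio[OF assms(3-9)] by blast
  obtain c N where c: "\<And>k. 0 < c k" "decseq c" and N: "\<And>k. 0 < N k"
    and summable: "(\<Sum>k. ennreal (\<Phi>2 (c k)) * ennreal e) < \<infinity>"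
    and blowup: "\<And>k. ennreal (real (Suc k)) \<le> ennreal (\<Phi>1 (N k * c k / real (Suc k))) * ennreal e"
    using young_functions_separating_sequences[OF assms(1,2) e] by blast
  have "\<exists>D\<in>lmeasurable. measure lebesgue D = e \<and> (\<forall>y\<in>D. N k * u2 y \<le> u1 y)" for k
    using translate N[of k] by simp
  then obtain D where D: "\<And>k. D k \<in> lmeasurable" "\<And>k. measure lebesgue (D k) = e"
    "\<And>k y. y \<in> D k \<Longrightarrow> N k * u2 y \<le> u1 y"
    by metis
  have D_emeasure: "emeasure lebesgue (D k) = ennreal e" for k
    using D(1,2) by (simp add: emeasure_eq_measure2)
  have c_nonneg: "\<And>k. 0 \<le> c k"
    using c(1) less_imp_le by blast
  define f where "f y = step_sup c D y / u2 y" for y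
  have "f \<in> weighted_orlicz \<Phi>2 u2"
    unfolding f_def[abs_def] using D(1) summable
    by (intro step_sup_div_in_weighted_orlicz[OF assms(2,6,4) c(2) c_nonneg]) (auto simp: D_emeasure)
  moreover have "f \<notin> weighted_orlicz \<Phi>1 u1"
  proof (rule not_in_weighted_orlicz_if_unbounded[OF assms(1)])
    show "D k \<in> sets lebesgue" for k
      using D(1) by blast
    show "0 \<le> N k * c k" for k
      using N[of k] c_nonneg[of k] by simp
    show "N k * c k \<le> \<bar>u1 y * f y\<bar>" if "y \<in> D k" for k y
    proof -
      have "N k * u2 y * c k \<le> u1 y * step_sup c D y"
        by (rule mult_mono[OF D(3)[OF that] step_sup_ge[where D = D, OF c(2) c_nonneg that]])
          (use assms(3)[of y] c_nonneg[of k] in auto)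
      then show ?thesis
        using assms(3,4)[of y] step_sup_nonneg[OF c(2) c_nonneg, of D y]
        by (simp add: f_def pos_le_divide_eq abs_mult mult_ac)
    qed
    show "ennreal (real (Suc k)) \<le> ennreal (\<Phi>1 (N k * c k / real (Suc k))) * emeasure lebesgue (D k)" for k
      using blowup[of k] by (simp only: D_emeasure)
  qed
  ultimately show ?thesis
    by blast
qed

theorem theorem2p4:
  fixes \<Phi>1 \<Phi>2 :: "real \<Rightarrow> real" and u1 u2 :: "'a::euclidean_space \<Rightarrow> real"
  assumes "young_function \<Phi>1" and "young_function \<Phi>2" and "young_prec \<Phi>1 \<Phi>2"
    and "\<And>x. u1 x > 0" and "\<And>x. u2 x > 0"
    and "u1 \<in> borel_measurable lebesgue" and "u2 \<in> borel_measurable lebesgue"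
    and "\<And>x y. u1 (x + y) \<le> u1 x * u1 y"
    and "\<And>x y. u2 (x + y) \<le> u2 x * u2 y"
  shows "(weight_preceq u1 u2 \<longleftrightarrow> weighted_orlicz \<Phi>2 u2 \<subseteq> weighted_orlicz \<Phi>1 u1)
    \<and> (weighted_orlicz \<Phi>2 u2 \<subseteq> weighted_orlicz \<Phi>1 u1 \<longleftrightarrow>
        (\<exists>C>0. \<forall>f\<in>weighted_orlicz \<Phi>2 u2.
           weighted_orlicz_norm \<Phi>1 u1 f \<le> ereal C * weighted_orlicz_norm \<Phi>2 u2 f))"
proof -
  let ?norm_bound = "\<exists>C>0. \<forall>f\<in>weighted_orlicz \<Phi>2 u2.
    weighted_orlicz_norm \<Phi>1 u1 f \<le> ereal C * weighted_orlicz_norm \<Phi>2 u2 f"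
  have ?norm_bound if preceq: "weight_preceq u1 u2"
  proof -
    obtain K where "K > 0"
      "\<And>f. weighted_orlicz_norm \<Phi>1 u1 f \<le> ereal K * weighted_orlicz_norm \<Phi>2 u2 f"
      using weighted_orlicz_norm_le_if_weight_preceq[OF assms(1-3) preceq less_imp_le[OF assms(4)]] by blast
    then show ?thesis
      by blast
  qed
  moreover have "weighted_orlicz \<Phi>2 u2 \<subseteq> weighted_orlicz \<Phi>1 u1" if bound: ?norm_bound
  proof -
    obtain C where "C > 0" "\<And>f. f \<in> weighted_orlicz \<Phi>2 u2 \<Longrightarrow>
        weighted_orlicz_norm \<Phi>1 u1 f \<le> ereal C * weighted_orlicz_norm \<Phi>2 u2 f"
      using bound by blast
    then show ?thesis
      by (rule weighted_orlicz_subset_if_norm_le[OF assms(2,7)])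
  qed
  moreover have "weight_preceq u1 u2" if "weighted_orlicz \<Phi>2 u2 \<subseteq> weighted_orlicz \<Phi>1 u1"
    using weighted_orlicz_not_subset[OF assms(1,2,4-9)] that by blast
  ultimately show ?thesis
    by blast
qed

end
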